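(* Let $f:\{0,1\}^n\to\{0,1\}$, $\delta>0$, $\beta_1\ge0$, let $\mu$ be a bit-wise product probability distribution on $\{0,1\}^n$, and let $A$ be a subcube with $\mu(A)>0$ and $\mu_1(A)\le\delta\mu_0(A)$. Suppose $(w_R)$, indexed by subcubes, satisfies $w_R\ge0$, $\sum_{R\ni x}w_R\le1$ for all $x\in\{0,1\}^n$, and $\sum_{R\ni x}w_R\le\beta_1$ for all $x\in f^{-1}(0)$. Let $\mathcal B$ be the set of subcubes $B$ whose support is disjoint from the support of $A$. Then $\sum_{B\in\mathcal B}\mu_1(B)w_B\le\beta_1+\delta$.
   Context: A subcube with support $s\in\{0,1,\star\}^n$ is $\{x: s_i\ne\star\Rightarrow x_i=s_i\}$; its support is the set $\{i:s_i\in\{0,1\}\}$. For $A\subseteq\{0,1\}^n$, $\mu_z(A)=\mu(A\cap f^{-1}(z))$. Bit-wise product: $\mu(x)=\prod_i p_i(x_i)$ with $p_i(0)+p_i(1)=1$. *)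

theory Defs
  imports Complex_Main "HOL-Library.FuncSet"
begin

text \<open>Points of the cube: functions on indices 0..n-1 (True = 1, False = 0).\<close>
definition cube :: "nat \<Rightarrow> (nat \<Rightarrow> bool) set" where
  "cube n = {0..<n} \<rightarrow>\<^sub>E (UNIV :: bool set)"

text \<open>Subcube descriptors s in {0,1,*}^n: Some b = fixed bit b, None = star.\<close>
definition subcube_specs :: "nat \<Rightarrow> (nat \<Rightarrow> bool option) set" where
  "subcube_specs n = {0..<n} \<rightarrow>\<^sub>E (UNIV :: bool option set)"

definition subcube :: "nat \<Rightarrow> (nat \<Rightarrow> bool option) \<Rightarrow> (nat \<Rightarrow> bool) set" where
  "subcube n s = {x \<in> cube n. \<forall>i<n. s i \<noteq> None \<longrightarrow> x i = the (s i)}"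

definition supp :: "nat \<Rightarrow> (nat \<Rightarrow> bool option) \<Rightarrow> nat set" where
  "supp n s = {i \<in> {0..<n}. s i \<noteq> None}"

definition pmu :: "nat \<Rightarrow> (nat \<Rightarrow> bool \<Rightarrow> real) \<Rightarrow> (nat \<Rightarrow> bool) set \<Rightarrow> real" where
  "pmu n p A = (\<Sum>x\<in>A \<inter> cube n. \<Prod>i<n. p i (x i))"

definition pmu_z :: "nat \<Rightarrow> (nat \<Rightarrow> bool \<Rightarrow> real) \<Rightarrow> ((nat \<Rightarrow> bool) \<Rightarrow> bool) \<Rightarrow> bool
    \<Rightarrow> (nat \<Rightarrow> bool) set \<Rightarrow> real" where
  "pmu_z n p f z A = pmu n p (A \<inter> {x. f x = z})"

end

theory Submission
  imports Defs
begin

text \<open>If the support of B avoids that of A, the events "x lies in B" and "x lies in A" are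
  independent under a product measure, so mu_1(B) mu(A) \<le> mu(B) mu(A) = mu(B \<inter> A).  Summing
  against the weights and exchanging the order of summation turns the sum of w_B mu(B \<inter> A) into
  an integral over A of the coverage x \<mapsto> \<Sum>{w_R | x \<in> R}, which is at most 1 on f\<inverse>(1) and at
  most beta_1 on f\<inverse>(0).  Hence it is bounded by mu_1(A) + beta_1 mu_0(A) \<le> (beta_1 + \<delta>) mu(A),
  and dividing by mu(A) > 0 gives the claim.\<close>

definition point_mass :: "nat \<Rightarrow> (nat \<Rightarrow> bool \<Rightarrow> real) \<Rightarrow> (nat \<Rightarrow> bool) \<Rightarrow> real" where
  "point_mass n p x = (\<Prod>i<n. p i (x i))"

lemma pmu_eq_sum_point_mass: "pmu n p X = (\<Sum>x\<in>X \<inter> cube n. point_mass n p x)"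
  unfolding pmu_def point_mass_def ..

lemma finite_cube: "finite (cube n)"
  unfolding cube_def by (intro finite_PiE) auto

lemma finite_subcube_specs: "finite (subcube_specs n)"
  unfolding subcube_specs_def by (intro finite_PiE) auto

lemma subcube_subset_cube: "subcube n s \<subseteq> cube n"
  unfolding subcube_def by auto

lemma point_mass_nonneg:
  assumes "\<And>i b. i < n \<Longrightarrow> p i b \<ge> 0"
  shows "point_mass n p x \<ge> 0"
  unfolding point_mass_def using assms by (auto intro: prod_nonneg)

lemma pmu_nonneg:
  assumes "\<And>i b. i < n \<Longrightarrow> p i b \<ge> 0"
  shows "pmu n p X \<ge> 0"
  unfolding pmu_eq_sum_point_mass using point_mass_nonneg[of n p, OF assms] by (rule sum_nonneg)

lemma pmu_mono:
  assumes "\<And>i b. i < n \<Longrightarrow> p i b \<ge> 0" and "X \<subseteq> Y"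
  shows "pmu n p X \<le> pmu n p Y"
  unfolding pmu_eq_sum_point_mass using assms finite_cube point_mass_nonneg[of n p]
  by (intro sum_mono2) auto

lemma pmu_z_le_pmu:
  assumes "\<And>i b. i < n \<Longrightarrow> p i b \<ge> 0"
  shows "pmu_z n p f z X \<le> pmu n p X"
  unfolding pmu_z_def using assms by (rule pmu_mono) auto

lemma pmu_split: "pmu n p X = pmu_z n p f True X + pmu_z n p f False X"
proof -
  have "pmu n p X = (\<Sum>x\<in>(X \<inter> {x. f x = True} \<inter> cube n) \<union> (X \<inter> {x. f x = False} \<inter> cube n).
      point_mass n p x)"
    unfolding pmu_eq_sum_point_mass by (rule sum.cong) auto
  also have "\<dots> = pmu_z n p f True X + pmu_z n p f False X"
    unfolding pmu_z_def pmu_eq_sum_point_mass using finite_cube by (intro sum.union_disjoint) auto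
  finally show ?thesis .
qed

definition fixed_bits :: "(nat \<Rightarrow> bool option) \<Rightarrow> nat \<Rightarrow> bool set" where
  "fixed_bits s i = (case s i of None \<Rightarrow> UNIV | Some b \<Rightarrow> {b})"

lemma subcube_eq_PiE: "subcube n s = PiE {..<n} (fixed_bits s)"
  unfolding subcube_def cube_def fixed_bits_def
  by (auto simp: PiE_def Pi_def extensional_def split: option.splits)

lemma pmu_subcube:
  assumes "\<And>i. i < n \<Longrightarrow> p i False + p i True = 1"
  shows "pmu n p (subcube n s) = (\<Prod>i<n. \<Sum>b\<in>fixed_bits s i. p i b)"
proof -
  have "pmu n p (subcube n s) = (\<Sum>x\<in>PiE {..<n} (fixed_bits s). \<Prod>i<n. p i (x i))"
    unfolding pmu_def by (simp add: Int_absorb2 subcube_subset_cube subcube_eq_PiE[symmetric])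
  also have "\<dots> = (\<Prod>i<n. \<Sum>b\<in>fixed_bits s i. p i b)"
    by (rule prod_sum_PiE[symmetric]) (auto simp: fixed_bits_def split: option.splits)
  finally show ?thesis .
qed

lemma subcube_Int_disjoint_supp:
  assumes "supp n B \<inter> supp n a = {}"
  shows "subcube n B \<inter> subcube n a = subcube n (a ++ B)"
  using assms unfolding subcube_def supp_def map_add_def
  by (auto split: option.splits)

lemma pmu_Int_subcube_disjoint_supp:
  assumes "\<And>i. i < n \<Longrightarrow> p i False + p i True = 1"
    and "supp n B \<inter> supp n a = {}"
  shows "pmu n p (subcube n B \<inter> subcube n a) = pmu n p (subcube n B) * pmu n p (subcube n a)"
proof -
  have "(\<Sum>b\<in>fixed_bits (a ++ B) i. p i b)
      = (\<Sum>b\<in>fixed_bits B i. p i b) * (\<Sum>b\<in>fixed_bits a i. p i b)" if "i < n" for i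
  proof -
    have "B i = None \<or> a i = None" using assms(2) that unfolding supp_def by auto
    moreover have "(\<Sum>b\<in>UNIV. p i b) = 1" using assms(1)[OF that] by (simp add: UNIV_bool)
    ultimately show ?thesis
      unfolding fixed_bits_def map_add_def by (auto split: option.splits)
  qed
  then show ?thesis
    by (simp add: subcube_Int_disjoint_supp[OF assms(2)] pmu_subcube[of n p, OF assms(1)]
        prod.distrib[symmetric])
qed

lemma pmu_z_mul_le_pmu_Int_subcube:
  assumes "\<And>i b. i < n \<Longrightarrow> p i b \<ge> 0" and "\<And>i. i < n \<Longrightarrow> p i False + p i True = 1"
    and "supp n B \<inter> supp n a = {}"
  shows "pmu_z n p f z (subcube n B) * pmu n p (subcube n a) \<le> pmu n p (subcube n B \<inter> subcube n a)"
proof -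
  have "pmu_z n p f z (subcube n B) * pmu n p (subcube n a)
      \<le> pmu n p (subcube n B) * pmu n p (subcube n a)"
    using assms(1) by (intro mult_right_mono pmu_z_le_pmu pmu_nonneg)
  also have "\<dots> = pmu n p (subcube n B \<inter> subcube n a)"
    using assms(2,3) by (rule pmu_Int_subcube_disjoint_supp[symmetric])
  finally show ?thesis .
qed

lemma sum_pmu_Int_subcube_swap:
  assumes "finite \<R>"
  shows "(\<Sum>R\<in>\<R>. pmu n p (subcube n R \<inter> X) * w R)
       = (\<Sum>x\<in>X \<inter> cube n. point_mass n p x * (\<Sum>R\<in>{R\<in>\<R>. x \<in> subcube n R}. w R))"
proof -
  let ?m = "point_mass n p"
  have "pmu n p (subcube n R \<inter> X) * w R
      = (\<Sum>x\<in>X \<inter> cube n. if x \<in> subcube n R then ?m x * w R else 0)" for R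
  proof -
    have "subcube n R \<inter> X \<inter> cube n = {x \<in> X \<inter> cube n. x \<in> subcube n R}" by auto
    then have "pmu n p (subcube n R \<inter> X) = (\<Sum>x\<in>X \<inter> cube n. if x \<in> subcube n R then ?m x else 0)"
      unfolding pmu_eq_sum_point_mass by (simp only:) (rule sum.inter_filter, simp add: finite_cube)
    then show ?thesis by (auto simp: sum_distrib_right intro!: sum.cong)
  qed
  then have "(\<Sum>R\<in>\<R>. pmu n p (subcube n R \<inter> X) * w R)
      = (\<Sum>x\<in>X \<inter> cube n. \<Sum>R\<in>\<R>. if x \<in> subcube n R then ?m x * w R else 0)"
    by (simp add: sum.swap[where A = \<R>])
  also have "\<dots> = (\<Sum>x\<in>X \<inter> cube n. ?m x * (\<Sum>R\<in>{R\<in>\<R>. x \<in> subcube n R}. w R))"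
    using assms by (auto simp: sum.inter_filter sum_distrib_left intro!: sum.cong)
  finally show ?thesis .
qed

lemma sum_pmu_Int_subcube_le:
  assumes p_nonneg: "\<And>i b. i < n \<Longrightarrow> p i b \<ge> 0"
    and \<R>: "\<R> \<subseteq> subcube_specs n"
    and w_nonneg: "\<And>R. R \<in> subcube_specs n \<Longrightarrow> w R \<ge> 0"
    and cover: "\<And>x. x \<in> cube n \<Longrightarrow> (\<Sum>R\<in>{R \<in> subcube_specs n. x \<in> subcube n R}. w R) \<le> 1"
    and cover0: "\<And>x. x \<in> cube n \<Longrightarrow> \<not> f x \<Longrightarrow>
           (\<Sum>R\<in>{R \<in> subcube_specs n. x \<in> subcube n R}. w R) \<le> \<beta>1"
  shows "(\<Sum>R\<in>\<R>. pmu n p (subcube n R \<inter> X) * w R)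
       \<le> pmu_z n p f True X + \<beta>1 * pmu_z n p f False X"
proof -
  let ?m = "point_mass n p"
  have fin: "finite \<R>" using \<R> finite_subcube_specs by (rule finite_subset)
  have coverage_le: "(\<Sum>R\<in>{R\<in>\<R>. x \<in> subcube n R}. w R) \<le> (if f x then 1 else \<beta>1)"
    if "x \<in> cube n" for x
  proof -
    have "(\<Sum>R\<in>{R\<in>\<R>. x \<in> subcube n R}. w R)
        \<le> (\<Sum>R\<in>{R \<in> subcube_specs n. x \<in> subcube n R}. w R)"
      using \<R> w_nonneg finite_subcube_specs by (intro sum_mono2) auto
    then show ?thesis using cover[OF that] cover0[OF that] by auto
  qed
  have "(\<Sum>x\<in>X \<inter> cube n. ?m x * (\<Sum>R\<in>{R\<in>\<R>. x \<in> subcube n R}. w R))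
      \<le> (\<Sum>x\<in>X \<inter> cube n. ?m x * (if f x then 1 else \<beta>1))"
    using coverage_le point_mass_nonneg[of n p, OF p_nonneg] by (intro sum_mono mult_left_mono) auto
  also have "\<dots> = (\<Sum>x\<in>X \<inter> cube n. if f x then ?m x else \<beta>1 * ?m x)"
    by (intro sum.cong) auto
  also have "\<dots> = pmu_z n p f True X + \<beta>1 * pmu_z n p f False X"
  proof -
    have "X \<inter> cube n \<inter> {x. f x} = X \<inter> {x. f x = True} \<inter> cube n"
      and "X \<inter> cube n \<inter> - {x. f x} = X \<inter> {x. f x = False} \<inter> cube n" by auto
    then show ?thesis
      unfolding pmu_z_def pmu_eq_sum_point_mass using finite_cube
      by (simp add: sum.If_cases sum_distrib_left)
  qed
  finally show ?thesis unfolding sum_pmu_Int_subcube_swap[OF fin] .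
qed

theorem mainTheorem13:
  fixes n :: nat and f :: "(nat \<Rightarrow> bool) \<Rightarrow> bool" and \<delta> \<beta>1 :: real
    and p :: "nat \<Rightarrow> bool \<Rightarrow> real" and a :: "nat \<Rightarrow> bool option"
    and w :: "(nat \<Rightarrow> bool option) \<Rightarrow> real"
  assumes "\<delta> > 0" and "\<beta>1 \<ge> 0"
    and "\<And>i b. i < n \<Longrightarrow> p i b \<ge> 0"
    and "\<And>i. i < n \<Longrightarrow> p i False + p i True = 1"
    and "a \<in> subcube_specs n"
    and "pmu n p (subcube n a) > 0"
    and "pmu_z n p f True (subcube n a) \<le> \<delta> * pmu_z n p f False (subcube n a)"
    and "\<And>R. R \<in> subcube_specs n \<Longrightarrow> w R \<ge> 0"
    and "\<And>x. x \<in> cube n \<Longrightarrow> (\<Sum>R\<in>{R \<in> subcube_specs n. x \<in> subcube n R}. w R) \<le> 1"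
    and "\<And>x. x \<in> cube n \<Longrightarrow> \<not> f x \<Longrightarrow>
           (\<Sum>R\<in>{R \<in> subcube_specs n. x \<in> subcube n R}. w R) \<le> \<beta>1"
  shows "(\<Sum>B\<in>{B \<in> subcube_specs n. supp n B \<inter> supp n a = {}}.
            pmu_z n p f True (subcube n B) * w B) \<le> \<beta>1 + \<delta>"
proof -
  define \<B> where "\<B> = {B \<in> subcube_specs n. supp n B \<inter> supp n a = {}}"
  define A where "A = subcube n a"
  have "(\<Sum>B\<in>\<B>. pmu_z n p f True (subcube n B) * w B) * pmu n p A
      \<le> (\<Sum>B\<in>\<B>. pmu n p (subcube n B \<inter> A) * w B)"
    unfolding sum_distrib_right A_def
    using pmu_z_mul_le_pmu_Int_subcube[of n p, OF assms(3,4)] assms(8)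
    by (intro sum_mono) (auto simp: \<B>_def mult.commute[of _ "w _"] mult.assoc mult_left_mono)
  also have "\<dots> \<le> pmu_z n p f True A + \<beta>1 * pmu_z n p f False A"
    by (rule sum_pmu_Int_subcube_le[of n p, OF assms(3) _ assms(8-10)]) (auto simp: \<B>_def)
  also have "\<dots> \<le> (\<beta>1 + \<delta>) * pmu_z n p f False A"
    using assms(7) by (simp add: A_def algebra_simps)
  also have "\<dots> \<le> (\<beta>1 + \<delta>) * pmu n p A"
    using assms(1,2) pmu_split[of n p A f] pmu_nonneg[of n p, OF assms(3)]
    by (intro mult_left_mono) (auto simp: pmu_z_def)
  finally show ?thesis
    using assms(6) unfolding \<B>_def A_def by simp
qed

end
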